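(* Let $k\ge 4$, $n=2k-1$, $\eta=(\eta_1<\dots<\eta_l)\in\mathbb{D}_k\setminus\{(3,k-3)\}$, and let $Y_{2\eta^*}$ be the Young diagram whose main diagonal consists of exactly the cells $c_{1,1},\dots,c_{l+1,l+1}$ and which satisfies $h_{1,1}=2n-4$, $h_{i,i}=2\eta_{l-(i-2)}$ for $2\le i\le l+1$, and $a(c_{i,i})=l(c_{i,i})+1$ for $1\le i\le l+1$. Let $\lambda$ be the partition whose parts are the hook lengths of the first-column cells of $Y_{2\eta^*}$. Then: (1) $\lambda$ has exactly $n-2$ parts; (2) its largest part is $\lambda_{n-2}=2n-4$; (3) its number of missing parts is $\#\mathcal{M}_\lambda=n-2$.
   Context: $\mathbb{D}_N$ is the set of partitions of $N$ into distinct parts, i.e. sequences $(\eta_1<\dots<\eta_l)$ of positive integers with sum $N$ and $l\ge 2$. For a partition $\lambda=(\lambda_1<\dots<\lambda_t)$ into distinct parts, $\mathcal{M}_\lambda=\{1,\dots,\lambda_t\}\setminus\{\lambda_1,\dots,\lambda_t\}$. Young diagrams are in English convention: rows top to bottom, columns left to right, $c_{i,j}$ the cell in row $i$, column $j$; arm $a(c_{i,j})$ = number of cells to its right in its row, leg $l(c_{i,j})$ = number of cells below it in its column, hook length $h_{i,j}=a+l+1$. *)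

theory Defs
  imports Main
begin

definition distinct_partitions :: "nat \<Rightarrow> nat list set" ("\<D>") where
  "\<D> N = {eta. sorted_wrt (<) eta \<and> (\<forall>x\<in>set eta. 0 < x) \<and> sum_list eta = N \<and> 2 \<le> length eta}"

definition missing_parts :: "nat set \<Rightarrow> nat set" where
  "missing_parts L = {1..Max L} - L"

(* Young diagram (English convention) as a finite set of cells (i,j), i = row, j = column,
   both 1-indexed, closed downwards / leftwards. *)
definition young_diagram :: "(nat \<times> nat) set \<Rightarrow> bool" where
  "young_diagram Y \<longleftrightarrow> finite Y \<and>
     (\<forall>(i,j)\<in>Y. 1 \<le> i \<and> 1 \<le> j \<and>
        (\<forall>i' j'. 1 \<le> i' \<and> i' \<le> i \<and> 1 \<le> j' \<and> j' \<le> j \<longrightarrow> (i',j') \<in> Y))"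

definition arm :: "(nat \<times> nat) set \<Rightarrow> nat \<Rightarrow> nat \<Rightarrow> nat" where
  "arm Y i j = card {j'. j < j' \<and> (i,j') \<in> Y}"

definition leg :: "(nat \<times> nat) set \<Rightarrow> nat \<Rightarrow> nat \<Rightarrow> nat" where
  "leg Y i j = card {i'. i < i' \<and> (i',j) \<in> Y}"

definition hook :: "(nat \<times> nat) set \<Rightarrow> nat \<Rightarrow> nat \<Rightarrow> nat" where
  "hook Y i j = arm Y i j + leg Y i j + 1"

definition first_column_hooks :: "(nat \<times> nat) set \<Rightarrow> nat set" where
  "first_column_hooks Y = {hook Y i 1 | i. (i,1) \<in> Y}"

end

theory Submission
  imports Defs
begin

(* Only the corner cell c_{1,1} matters. The first column of a Young diagram consists of
   l(c_{1,1}) + 1 cells whose hook lengths strictly decrease downwards, so lambda has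
   l(c_{1,1}) + 1 distinct parts and largest part h_{1,1}. From a = l + 1 and h = 2n - 4 at
   c_{1,1} we get l(c_{1,1}) = n - 3. Finally, a set of positive parts misses exactly
   (largest part) - (number of parts) values below its maximum, here (2n - 4) - (n - 2). *)

lemma young_diagram_finite: "young_diagram Y \<Longrightarrow> finite Y"
  unfolding young_diagram_def by blast

lemma young_diagram_pos:
  assumes "young_diagram Y" "(i, j) \<in> Y"
  shows "1 \<le> i" "1 \<le> j"
  using assms unfolding young_diagram_def by blast+

lemma young_diagram_downward_closed:
  assumes "young_diagram Y" "(i, j) \<in> Y" "1 \<le> i'" "i' \<le> i" "1 \<le> j'" "j' \<le> j"
  shows "(i', j') \<in> Y"
  using assms unfolding young_diagram_def by blast

lemma column_eq_atLeastAtMost: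
  assumes Y: "young_diagram Y" and top: "(1, j) \<in> Y"
  shows "{i. (i, j) \<in> Y} = {1..Suc (leg Y 1 j)}"
proof -
  let ?C = "{i. (i, j) \<in> Y}"
  have "?C \<subseteq> fst ` Y" by force
  then have fin: "finite ?C" using young_diagram_finite[OF Y] finite_subset by blast
  define m where "m = Max ?C"
  have bottom: "(m, j) \<in> Y" using Max_in[OF fin] top unfolding m_def by blast
  have "?C \<subseteq> {1..m}" using young_diagram_pos[OF Y] Max_ge[OF fin] unfolding m_def by auto
  moreover have "{1..m} \<subseteq> ?C"
    using young_diagram_downward_closed[OF Y bottom] young_diagram_pos[OF Y bottom] by auto
  ultimately have C: "?C = {1..m}" by blast
  then have "{i'. 1 < i' \<and> (i', j) \<in> Y} = {2..m}" by auto
  then have "leg Y 1 j = m - 1" unfolding leg_def by simp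
  moreover have "1 \<le> m" using C top by auto
  ultimately show ?thesis using C by simp
qed

lemma leg_in_column:
  assumes "young_diagram Y" "(1, j) \<in> Y"
  shows "leg Y i j = Suc (leg Y 1 j) - i"
proof -
  have "{i'. i < i' \<and> (i', j) \<in> Y} = {Suc i..Suc (leg Y 1 j)}"
    using column_eq_atLeastAtMost[OF assms] by auto
  then show ?thesis unfolding leg_def by simp
qed

lemma arm_antimono:
  assumes Y: "young_diagram Y" and "1 \<le> i" "i \<le> i'"
  shows "arm Y i' j \<le> arm Y i j"
proof -
  have "{j'. j < j' \<and> (i, j') \<in> Y} \<subseteq> snd ` Y" by force
  then have "finite {j'. j < j' \<and> (i, j') \<in> Y}"
    using young_diagram_finite[OF Y] finite_subset by blast
  moreover have "{j'. j < j' \<and> (i', j') \<in> Y} \<subseteq> {j'. j < j' \<and> (i, j') \<in> Y}"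
  proof (intro subsetI CollectI)
    fix j' assume "j' \<in> {j'. j < j' \<and> (i', j') \<in> Y}"
    then have "j < j'" "(i', j') \<in> Y" by simp_all
    then show "j < j' \<and> (i, j') \<in> Y"
      using young_diagram_downward_closed young_diagram_pos Y assms(2,3) by blast
  qed
  ultimately show ?thesis unfolding arm_def by (rule card_mono)
qed

lemma hook_strict_antimono_in_column:
  assumes Y: "young_diagram Y" and "1 \<le> i" "i < i'" and lower: "(i', j) \<in> Y"
  shows "hook Y i' j < hook Y i j"
proof -
  have top: "(1, j) \<in> Y"
    using young_diagram_downward_closed[OF Y lower] young_diagram_pos[OF Y lower] by simp
  have "i' \<le> Suc (leg Y 1 j)" using column_eq_atLeastAtMost[OF Y top] lower by auto
  then have "leg Y i' j < leg Y i j"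
    using leg_in_column[OF Y top, of i] leg_in_column[OF Y top, of i'] \<open>i < i'\<close> by linarith
  moreover have "arm Y i' j \<le> arm Y i j" using arm_antimono[OF Y] assms(2,3) by simp
  ultimately show ?thesis unfolding hook_def by simp
qed

lemma first_column_hooks_eq_image:
  assumes "young_diagram Y" "(1, 1) \<in> Y"
  shows "first_column_hooks Y = (\<lambda>i. hook Y i 1) ` {1..Suc (leg Y 1 1)}"
  using column_eq_atLeastAtMost[OF assms] unfolding first_column_hooks_def by auto

lemma card_first_column_hooks:
  assumes Y: "young_diagram Y" and top: "(1, 1) \<in> Y"
  shows "card (first_column_hooks Y) = Suc (leg Y 1 1)"
proof -
  have "inj_on (\<lambda>i. hook Y i 1) {1..Suc (leg Y 1 1)}"
  proof (rule linorder_inj_onI')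
    fix i i' assume "i \<in> {1..Suc (leg Y 1 1)}" "i' \<in> {1..Suc (leg Y 1 1)}" "i < i'"
    then show "hook Y i 1 \<noteq> hook Y i' 1"
      using hook_strict_antimono_in_column[OF Y] column_eq_atLeastAtMost[OF Y top]
      by (metis (mono_tags) atLeastAtMost_iff less_irrefl mem_Collect_eq)
  qed
  then show ?thesis unfolding first_column_hooks_eq_image[OF Y top] by (simp add: card_image)
qed

lemma Max_first_column_hooks:
  assumes Y: "young_diagram Y" and top: "(1, 1) \<in> Y"
  shows "Max (first_column_hooks Y) = hook Y 1 1"
  unfolding first_column_hooks_eq_image[OF Y top]
proof (rule Max_eqI)
  fix h assume "h \<in> (\<lambda>i. hook Y i 1) ` {1..Suc (leg Y 1 1)}"
  then obtain i where "1 \<le> i" "i \<le> Suc (leg Y 1 1)" "h = hook Y i 1" by auto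
  moreover have "(i, 1) \<in> Y" using column_eq_atLeastAtMost[OF Y top] calculation(1,2) by auto
  ultimately show "h \<le> hook Y 1 1"
    using hook_strict_antimono_in_column[OF Y, of 1 i 1] by (cases "i = 1") auto
qed auto

lemma card_missing_parts:
  assumes "finite L" "0 \<notin> L"
  shows "card (missing_parts L) = Max L - card L"
proof -
  have "L \<subseteq> {1..Max L}"
    using assms Max_ge by (metis atLeastAtMost_iff less_one not_le subsetI)
  then show ?thesis unfolding missing_parts_def using assms(1) by (simp add: card_Diff_subset)
qed

theorem corollary3p16:
  fixes k n l :: nat and eta :: "nat list" and Y :: "(nat \<times> nat) set"
  assumes "4 \<le> k"
    and "n = 2 * k - 1"
    and "eta \<in> \<D> k - {[3, k - 3]}"
    and "l = length eta"
    and "young_diagram Y"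
    and "\<forall>i\<ge>1. (i,i) \<in> Y \<longleftrightarrow> i \<le> l + 1"
    and "hook Y 1 1 = 2 * n - 4"
    and "\<forall>i. 2 \<le> i \<and> i \<le> l + 1 \<longrightarrow> hook Y i i = 2 * (eta ! (l - (i - 2) - 1))"
    and "\<forall>i. 1 \<le> i \<and> i \<le> l + 1 \<longrightarrow> arm Y i i = leg Y i i + 1"
  shows "card (first_column_hooks Y) = n - 2
       \<and> Max (first_column_hooks Y) = 2 * n - 4
       \<and> card (missing_parts (first_column_hooks Y)) = n - 2"
proof -
  note Y = assms(5)
  have top: "(1, 1) \<in> Y" using assms(6) by simp
  have "arm Y 1 1 = leg Y 1 1 + 1" using assms(9) by simp
  then have "leg Y 1 1 = n - 3" using assms(1,2,7) unfolding hook_def by simp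
  then have card: "card (first_column_hooks Y) = n - 2"
    using card_first_column_hooks[OF Y top] assms(1,2) by simp
  have Max: "Max (first_column_hooks Y) = 2 * n - 4"
    using Max_first_column_hooks[OF Y top] assms(7) by simp
  have "finite (first_column_hooks Y)" "0 \<notin> first_column_hooks Y"
    using first_column_hooks_eq_image[OF Y top] unfolding hook_def by auto
  then have "card (missing_parts (first_column_hooks Y)) = n - 2"
    using card_missing_parts card Max assms(1,2) by simp
  with card Max show ?thesis by simp
qed

end
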